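(* Let $d>0$, $\mu>0$, let $J$ satisfy (J) but $\int_{-\infty}^0\int_0^{+\infty}J(x-y)\,dy\,dx=+\infty$, and let $f$ satisfy (f3). Let $\{J_n\}$ be a sequence of nonnegative, continuous, even functions with nonempty compact support such that $J_n\le J_{n+1}\le J$ for all $n\ge1$ and $J_n\to J$ in $L^1(\mathbb{R})$, and let $\sigma_n,\eta_n$ be as in the context. Suppose that for each sufficiently large $n$, $c_n>0$ is the unique value for which the problem $$d\int_{-\infty}^0J_n(x-y)\phi(y)\,dy-d\phi(x)+c_n\phi'(x)+f(\phi(x))=0\ (x<0),\quad \phi(-\infty)=\eta_n,\ \phi(0)=0,\quad c_n=\mu\int_{-\infty}^0\int_0^{+\infty}J_n(x-y)\phi(x)\,dy\,dx$$ has a solution $\phi=\phi_n\in C^1((-\infty,0])$ strictly decreasing in $x$. Then $\lim_{n\to\infty}c_n=\infty$.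
   Context: Condition (J): $J\in C(\mathbb{R})\cap L^\infty(\mathbb{R})$, $J\ge 0$, $J(0)>0$, $\int_{\mathbb{R}}J=1$, $J$ even. Condition (f3): $f\in C^1([0,\infty))$, $f(0)=f(1)=0$, $f>0$ in $(0,1)$, $f'(0)>0>f'(1)$, $f(u)/u$ nonincreasing in $u>0$. $\sigma_n:=\int_{\mathbb{R}}J_n\in(0,1]$, $\sigma_n\to1$; for large $n$, $\eta_n\in(0,1)$ denotes the unique positive zero of $u\mapsto f(u)-(1-\sigma_n)u$. Standing assumption in the paper's setting: for some initial datum $u_0$ (with $u_0\in C([-h_0,h_0])$, $u_0(\pm h_0)=0$, $u_0>0$ inside) the solution $(u,g,h)$ of the nonlocal free boundary problem $u_t=d\int_{g}^{h}J(x-y)u(t,y)dy-du+f(u)$, $u(t,g)=u(t,h)=0$, $h'=\mu\int_g^h\int_h^\infty J(x-y)u\,dydx$, $g'=-\mu\int_g^h\int_{-\infty}^gJ(x-y)u\,dydx$, $u(0)=u_0$, $h(0)=-g(0)=h_0$, spreads ($h\to\infty$, $g\to-\infty$, $u\to1$ locally uniformly). *)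

theory Defs
  imports "HOL-Analysis.Analysis"
begin

definition kernel_J :: "(real \<Rightarrow> real) \<Rightarrow> bool" where
  "kernel_J J \<longleftrightarrow> continuous_on UNIV J \<and> (\<exists>B. \<forall>x. \<bar>J x\<bar> \<le> B)
     \<and> (\<forall>x. J x \<ge> 0) \<and> J 0 > 0 \<and> integrable lborel J \<and> integral\<^sup>L lborel J = 1
     \<and> (\<forall>x. J (-x) = J x)"

definition cond_f3 :: "(real \<Rightarrow> real) \<Rightarrow> bool" where
  "cond_f3 f \<longleftrightarrow>
     (\<exists>f'. (\<forall>u\<ge>0. (f has_real_derivative f' u) (at u within {0..}))
          \<and> continuous_on {0..} f' \<and> f' 0 > 0 \<and> f' 1 < 0)
     \<and> f 0 = 0 \<and> f 1 = 0 \<and> (\<forall>u. 0 < u \<and> u < 1 \<longrightarrow> f u > 0)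
     \<and> (\<forall>u v. 0 < u \<and> u \<le> v \<longrightarrow> f v / v \<le> f u / u)"

definition eta :: "(real \<Rightarrow> real) \<Rightarrow> real \<Rightarrow> real" where
  "eta f \<sigma> = (THE u. 0 < u \<and> f u - (1 - \<sigma>) * u = 0)"

definition semiwave ::
  "real \<Rightarrow> real \<Rightarrow> (real \<Rightarrow> real) \<Rightarrow> (real \<Rightarrow> real) \<Rightarrow> real \<Rightarrow> real \<Rightarrow> (real \<Rightarrow> real) \<Rightarrow> bool" where
  "semiwave d \<mu> K f \<eta> c \<phi> \<longleftrightarrow>
     (\<exists>\<phi>'. (\<forall>x\<le>0. (\<phi> has_real_derivative \<phi>' x) (at x within {..0}))
         \<and> continuous_on {..0} \<phi>'
         \<and> (\<forall>x<0. d * (LINT y:{..0}|lborel. K (x - y) * \<phi> y) - d * \<phi> x + c * \<phi>' x + f (\<phi> x) = 0))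
     \<and> (\<forall>x y. x < y \<and> y \<le> 0 \<longrightarrow> \<phi> y < \<phi> x)
     \<and> (\<phi> \<longlongrightarrow> \<eta>) at_bot \<and> \<phi> 0 = 0
     \<and> (\<integral>\<^sup>+ x. \<integral>\<^sup>+ y. ennreal (indicator {..0} x * indicator {0..} y * K (x - y) * \<phi> x) \<partial>lborel \<partial>lborel)
        = ennreal (c / \<mu>)"

end

theory Submission
  imports Defs
begin

(* Integrating the equation of a semi-wave phi with kernel K of mass sigma over [x,0), and using
   the symmetry of K together with the free-boundary condition c = mu * int int K(x-y) phi(x),
   gives the energy estimate
     d * int_[x,0) (phi x - phi y) * int_{z<x} K(z-y) dz dy
       + int_[x,0) (f (phi y) - d (1 - sigma) phi y) dy  <=  c * (phi x + d/mu).
   Once d (1 - sigma) <= f(1/2), the reaction excess is at least f(1/2) phi wherever phi <= 1/2.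
   Hence phi reaches 1/2 at some a < 0, and if c < M then phi <= 1/4 on [a + l, 0) for some
   l proportional to M; fed back into the estimate, this bounds the tail moment
   int K(u) (-u-l)^+ du by a constant multiple of M. For K = J the tail moment is infinite, which
   is exactly the hypothesis on J, and by monotone convergence the tail moments of J_n exceed any
   bound for large n. Hence c_n >= M eventually. *)

section \<open>Kernel masses and tail moments\<close>

definition kernel_mass :: "(real \<Rightarrow> real) \<Rightarrow> real set \<Rightarrow> real \<Rightarrow> ennreal" where
  "kernel_mass K A y = (\<integral>\<^sup>+z. indicator A z * ennreal (K (z - y)) \<partial>lborel)"

(* For even K, int_{x<=0} int_{y>=0} K (x - y) dy dx = tail_moment K 0; the hypothesis on J says
   that this is infinite. *)
definition tail_moment :: "(real \<Rightarrow> real) \<Rightarrow> real \<Rightarrow> ennreal" where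
  "tail_moment K l = (\<integral>\<^sup>+u. ennreal (K u) * ennreal (max 0 (- u - l)) \<partial>lborel)"

lemma kernel_mass_measurable[measurable]:
  assumes [measurable]: "K \<in> borel_measurable borel" "A \<in> sets borel"
  shows "kernel_mass K A \<in> borel_measurable borel"
  unfolding kernel_mass_def[abs_def] by measurable

lemma kernel_mass_UNIV:
  assumes [measurable]: "K \<in> borel_measurable borel"
  shows "kernel_mass K UNIV y = (\<integral>\<^sup>+t. ennreal (K t) \<partial>lborel)"
  unfolding kernel_mass_def by (subst nn_integral_real_affine[where c=1 and t=y]) auto

lemma kernel_mass_Un:
  assumes [measurable]: "K \<in> borel_measurable borel" "A \<in> sets borel" "B \<in> sets borel"
    and "A \<inter> B = {}"
  shows "kernel_mass K (A \<union> B) y = kernel_mass K A y + kernel_mass K B y"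
  unfolding kernel_mass_def using assms(4)
  by (subst nn_integral_add[symmetric]) (auto intro!: nn_integral_cong simp: indicator_def)

lemma nn_integral_kernel_swap:
  fixes g h :: "real \<Rightarrow> ennreal"
  assumes [measurable]: "K \<in> borel_measurable borel" "g \<in> borel_measurable borel"
    "h \<in> borel_measurable borel"
  shows "(\<integral>\<^sup>+y. g y * (\<integral>\<^sup>+z. h z * ennreal (K (z - y)) \<partial>lborel) \<partial>lborel)
       = (\<integral>\<^sup>+z. h z * (\<integral>\<^sup>+y. g y * ennreal (K (z - y)) \<partial>lborel) \<partial>lborel)"
proof -
  have "(\<integral>\<^sup>+y. g y * (\<integral>\<^sup>+z. h z * ennreal (K (z - y)) \<partial>lborel) \<partial>lborel)
      = (\<integral>\<^sup>+y. \<integral>\<^sup>+z. h z * (g y * ennreal (K (z - y))) \<partial>lborel \<partial>lborel)"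
    by (simp add: nn_integral_cmult[symmetric] mult_ac)
  also have "\<dots> = (\<integral>\<^sup>+z. \<integral>\<^sup>+y. h z * (g y * ennreal (K (z - y))) \<partial>lborel \<partial>lborel)"
    by (rule lborel_pair.Fubini') measurable
  also have "\<dots> = (\<integral>\<^sup>+z. h z * (\<integral>\<^sup>+y. g y * ennreal (K (z - y)) \<partial>lborel) \<partial>lborel)"
    by (simp add: nn_integral_cmult)
  finally show ?thesis .
qed

lemma kernel_mass_swap:
  assumes [measurable]: "K \<in> borel_measurable borel" "A \<in> sets borel" "B \<in> sets borel"
    and even: "\<And>t. K (- t) = K t"
  shows "(\<integral>\<^sup>+y. indicator B y * kernel_mass K A y \<partial>lborel)
       = (\<integral>\<^sup>+z. indicator A z * kernel_mass K B z \<partial>lborel)"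
proof -
  have "K (z - y) = K (y - z)" for y z
    using even[of "y - z"] by simp
  then show ?thesis
    unfolding kernel_mass_def
    by (subst nn_integral_kernel_swap) (auto simp del: indicator_simps)
qed

lemma nn_integral_kernel_mass:
  assumes [measurable]: "K \<in> borel_measurable borel" "A \<in> sets borel" "B \<in> sets borel"
  shows "(\<integral>\<^sup>+y. indicator A y * kernel_mass K B y \<partial>lborel)
       = (\<integral>\<^sup>+u. ennreal (K u) * emeasure lborel {y \<in> A. y + u \<in> B} \<partial>lborel)"
proof -
  have "kernel_mass K B y = (\<integral>\<^sup>+u. indicator B (y + u) * ennreal (K u) \<partial>lborel)" for y
    unfolding kernel_mass_def by (subst nn_integral_real_affine[where c=1 and t=y]) auto
  then have "(\<integral>\<^sup>+y. indicator A y * kernel_mass K B y \<partial>lborel)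
      = (\<integral>\<^sup>+y. \<integral>\<^sup>+u. ennreal (K u) * indicator {y \<in> A. y + u \<in> B} y \<partial>lborel \<partial>lborel)"
    by (simp add: nn_integral_cmult[symmetric]) (auto intro!: nn_integral_cong simp: indicator_def)
  also have "\<dots> = (\<integral>\<^sup>+u. \<integral>\<^sup>+y. ennreal (K u) * indicator {y \<in> A. y + u \<in> B} y \<partial>lborel \<partial>lborel)"
    by (rule lborel_pair.Fubini') measurable
  also have "\<dots> = (\<integral>\<^sup>+u. ennreal (K u) * emeasure lborel {y \<in> A. y + u \<in> B} \<partial>lborel)"
    by (intro nn_integral_cong nn_integral_cmult_indicator) measurable
  finally show ?thesis .
qed

lemma nn_integral_kernel_mass_reflected:
  assumes [measurable]: "K \<in> borel_measurable borel" "A \<in> sets borel" "B \<in> sets borel"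
    and even: "\<And>t. K (- t) = K t"
  shows "(\<integral>\<^sup>+y. indicator A y * kernel_mass K B y \<partial>lborel)
       = (\<integral>\<^sup>+u. ennreal (K u) * emeasure lborel {y \<in> A. y - u \<in> B} \<partial>lborel)"
  unfolding nn_integral_kernel_mass[OF assms(1-3)]
  by (subst nn_integral_real_affine[where c="-1" and t=0]) (auto simp: even)

lemma overlap_measure_bound:
  fixes a l u :: real
  assumes "a < 0" and "0 \<le> l"
  shows "ennreal (max 0 (- u - l)) \<le> emeasure lborel {y \<in> {a + l..<0}. y + u \<in> {..<a}}
           + emeasure lborel {y \<in> {..<a}. y - u \<in> {0..}}"
proof -
  have near: "emeasure lborel {a + l..<min 0 (a - u)} \<le> emeasure lborel {y \<in> {a + l..<0}. y + u \<in> {..<a}}"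
    by (intro emeasure_mono) auto
  have far: "emeasure lborel {u..<a} \<le> emeasure lborel {y \<in> {..<a}. y - u \<in> {0..}}"
    by (intro emeasure_mono) auto
  consider "- u - l \<le> 0" | "0 < - u - l" "- u \<le> - a" | "0 < - u - l" "- a < - u" "l \<le> - a"
    | "0 < - u - l" "- a < - u" "- a < l"
    by linarith
  then show ?thesis
  proof cases
    case 2
    then have "ennreal (max 0 (- u - l)) = emeasure lborel {a + l..<min 0 (a - u)}"
      by (simp add: min_def)
    then show ?thesis using near by (simp add: add_increasing2)
  next
    case 3
    then have "ennreal (max 0 (- u - l)) = ennreal (- a - l) + ennreal (a - u)"
      by (subst ennreal_plus[symmetric]) auto
    also have "\<dots> \<le> emeasure lborel {y \<in> {a + l..<0}. y + u \<in> {..<a}}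
           + emeasure lborel {y \<in> {..<a}. y - u \<in> {0..}}"
      using near far 3 by (intro add_mono) (auto simp: min_def)
    finally show ?thesis .
  next
    case 4
    then have "ennreal (max 0 (- u - l)) \<le> emeasure lborel {u..<a}"
      by (auto intro: ennreal_leI)
    then show ?thesis using far by (simp add: add_increasing order_trans)
  qed simp
qed

lemma tail_moment_le_kernel_masses:
  assumes [measurable]: "K \<in> borel_measurable borel"
    and even: "\<And>t. K (- t) = K t" and "a < 0" and "0 \<le> l"
  shows "tail_moment K l \<le> (\<integral>\<^sup>+y. indicator {a + l..<0} y * kernel_mass K {..<a} y \<partial>lborel)
           + (\<integral>\<^sup>+y. indicator {..<a} y * kernel_mass K {0..} y \<partial>lborel)"
proof -
  have "tail_moment K l \<le> (\<integral>\<^sup>+u. ennreal (K u) * emeasure lborel {y \<in> {a + l..<0}. y + u \<in> {..<a}}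
           + ennreal (K u) * emeasure lborel {y \<in> {..<a}. y - u \<in> {0..}} \<partial>lborel)"
    unfolding tail_moment_def distrib_left[symmetric]
    by (intro nn_integral_mono mult_left_mono overlap_measure_bound) (use assms in auto)
  also have "\<dots> = (\<integral>\<^sup>+u. ennreal (K u) * emeasure lborel {y \<in> {a + l..<0}. y + u \<in> {..<a}} \<partial>lborel)
           + (\<integral>\<^sup>+u. ennreal (K u) * emeasure lborel {y \<in> {..<a}. y - u \<in> {0..}} \<partial>lborel)"
    by (rule nn_integral_add) auto
  also have "\<dots> = (\<integral>\<^sup>+y. indicator {a + l..<0} y * kernel_mass K {..<a} y \<partial>lborel)
           + (\<integral>\<^sup>+y. indicator {..<a} y * kernel_mass K {0..} y \<partial>lborel)"
    using nn_integral_kernel_mass[of K "{a + l..<0}" "{..<a}"]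
      nn_integral_kernel_mass_reflected[of K "{..<a}" "{0..}"] even by simp
  finally show ?thesis .
qed

lemma nn_integral_half_lines_kernel_mass:
  assumes [measurable]: "K \<in> borel_measurable borel"
    and K_nonneg: "\<And>t. 0 \<le> K t" and even: "\<And>t. K (- t) = K t"
    and h_nonneg: "\<And>x. x \<le> 0 \<Longrightarrow> 0 \<le> h x"
  shows "(\<integral>\<^sup>+x. \<integral>\<^sup>+y. ennreal (indicator {..0} x * indicator {0..} y * K (x - y) * h x) \<partial>lborel \<partial>lborel)
       = (\<integral>\<^sup>+x. ennreal (indicator {..0} x * h x) * kernel_mass K {0..} x \<partial>lborel)"
proof (rule nn_integral_cong)
  fix x
  have "ennreal (indicator {..0} x * indicator {0..} y * K (x - y) * h x)
      = ennreal (indicator {..0} x * h x) * (indicator {0..} y * ennreal (K (y - x)))" for y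
    using even[of "y - x"] K_nonneg[of "y - x"] h_nonneg[of x]
    by (auto simp: indicator_def ennreal_mult mult_ac)
  then show "(\<integral>\<^sup>+y. ennreal (indicator {..0} x * indicator {0..} y * K (x - y) * h x) \<partial>lborel)
      = ennreal (indicator {..0} x * h x) * kernel_mass K {0..} x"
    unfolding kernel_mass_def by (simp add: nn_integral_cmult)
qed

lemma tail_moment_eq_infinity:
  assumes [measurable]: "K \<in> borel_measurable borel"
    and K_nonneg: "\<And>t. 0 \<le> K t" and even: "\<And>t. K (- t) = K t"
    and finite: "(\<integral>\<^sup>+t. ennreal (K t) \<partial>lborel) < \<infinity>" and "0 \<le> l"
    and infinite: "(\<integral>\<^sup>+x. \<integral>\<^sup>+y. ennreal (indicator {..0} x * indicator {0..} y * K (x - y)) \<partial>lborel \<partial>lborel) = \<infinity>"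
  shows "tail_moment K l = \<infinity>"
proof -
  have "\<infinity> = (\<integral>\<^sup>+x. indicator {..0} x * kernel_mass K {0..} x \<partial>lborel)"
    using infinite nn_integral_half_lines_kernel_mass[of K "\<lambda>_. 1"] K_nonneg even by (simp add: ennreal_indicator)
  also have "\<dots> = (\<integral>\<^sup>+u. ennreal (K u) * emeasure lborel {y \<in> {..0}. y - u \<in> {0..}} \<partial>lborel)"
    by (rule nn_integral_kernel_mass_reflected) (auto simp: even)
  also have "\<dots> \<le> (\<integral>\<^sup>+u. ennreal (K u) * ennreal (max 0 (- u - l)) + ennreal (K u) * ennreal l \<partial>lborel)"
  proof (intro nn_integral_mono)
    fix u :: real
    have "emeasure lborel {y \<in> {..0}. y - u \<in> {0..}} \<le> emeasure lborel {u..0}"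
      by (intro emeasure_mono) auto
    also have "\<dots> \<le> ennreal (max 0 (- u - l) + l)"
      using \<open>0 \<le> l\<close> by (cases "u \<le> 0") (auto intro!: ennreal_leI simp del: ennreal_plus)
    also have "\<dots> = ennreal (max 0 (- u - l)) + ennreal l"
      using \<open>0 \<le> l\<close> by (simp add: ennreal_plus)
    finally show "ennreal (K u) * emeasure lborel {y \<in> {..0}. y - u \<in> {0..}}
        \<le> ennreal (K u) * ennreal (max 0 (- u - l)) + ennreal (K u) * ennreal l"
      by (simp add: distrib_left[symmetric] mult_left_mono)
  qed
  also have "\<dots> = tail_moment K l + (\<integral>\<^sup>+t. ennreal (K t) \<partial>lborel) * ennreal l"
    unfolding tail_moment_def by (simp add: nn_integral_add nn_integral_multc)
  finally have "tail_moment K l + (\<integral>\<^sup>+t. ennreal (K t) \<partial>lborel) * ennreal l = \<infinity>"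
    by (simp add: top_unique)
  moreover have "(\<integral>\<^sup>+t. ennreal (K t) \<partial>lborel) * ennreal l \<noteq> \<infinity>"
    using finite by (simp add: ennreal_mult_eq_top_iff)
  ultimately show ?thesis
    by (simp add: ennreal_add_eq_top)
qed

section \<open>Monotone approximation of the kernel\<close>

lemma integrable_continuous_compact_support:
  fixes g :: "real \<Rightarrow> real"
  assumes "continuous_on UNIV g" and "compact (closure {x. g x \<noteq> 0})"
  shows "integrable lborel g"
proof -
  let ?S = "closure {x. g x \<noteq> 0}"
  have "integrable lborel (\<lambda>x. indicator ?S x *\<^sub>R g x)"
    using assms by (intro borel_integrable_compact continuous_on_subset[OF assms(1)]) auto
  also have "(\<lambda>x. indicator ?S x *\<^sub>R g x) = g"
    using closure_subset[of "{x. g x \<noteq> 0}"] by (auto simp: indicator_def fun_eq_iff)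
  finally show ?thesis .
qed

locale approximating_kernels =
  fixes J :: "real \<Rightarrow> real" and Jn :: "nat \<Rightarrow> real \<Rightarrow> real"
  assumes kernel_J: "kernel_J J"
    and Jn_continuous: "\<And>n. continuous_on UNIV (Jn n)" and Jn_nonneg: "\<And>n x. 0 \<le> Jn n x"
    and Jn_support: "\<And>n. compact (closure {x. Jn n x \<noteq> 0})"
    and Jn_mono: "\<And>n x. Jn n x \<le> Jn (Suc n) x" and Jn_le_J: "\<And>n x. Jn n x \<le> J x"
    and L1: "(\<lambda>n. LINT x|lborel. \<bar>Jn n x - J x\<bar>) \<longlonglongrightarrow> 0"
begin

lemma J_measurable[measurable]: "J \<in> borel_measurable borel"
  using kernel_J unfolding kernel_J_def by (auto intro: borel_measurable_continuous_onI)

lemma Jn_measurable[measurable]: "Jn n \<in> borel_measurable borel"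
  using Jn_continuous by (rule borel_measurable_continuous_onI)

lemma J_integrable: "integrable lborel J"
  and J_nonneg: "0 \<le> J x" and J_even: "J (- x) = J x" and J_mass: "(LINT x|lborel. J x) = 1"
  using kernel_J unfolding kernel_J_def by auto

lemma Jn_integrable: "integrable lborel (Jn n)"
  using Jn_continuous Jn_support by (rule integrable_continuous_compact_support)

lemma Jn_mass_le_1: "(LINT x|lborel. Jn n x) \<le> 1"
  unfolding J_mass[symmetric] using Jn_integrable J_integrable Jn_le_J by (intro integral_mono)

lemma Jn_mass_tendsto_1: "(\<lambda>n. LINT x|lborel. Jn n x) \<longlonglongrightarrow> 1"
proof -
  have "norm ((LINT x|lborel. Jn n x) - 1) \<le> (LINT x|lborel. \<bar>Jn n x - J x\<bar>)" for n
    using integral_norm_bound[of lborel "\<lambda>x. Jn n x - J x"] Jn_integrable J_integrable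
    by (simp add: J_mass[symmetric])
  then have "(\<lambda>n. (LINT x|lborel. Jn n x) - 1) \<longlonglongrightarrow> 0"
    by (intro Lim_null_comparison[OF always_eventually L1]) auto
  then show ?thesis
    by (simp add: LIM_zero_iff)
qed

lemma eventually_mass_defect_le:
  assumes "0 < k"
  shows "eventually (\<lambda>n. d * (1 - (LINT x|lborel. Jn n x)) \<le> k) sequentially"
proof -
  have "(\<lambda>n. d * (1 - (LINT x|lborel. Jn n x))) \<longlonglongrightarrow> d * (1 - 1)"
    by (intro tendsto_intros Jn_mass_tendsto_1)
  then have "eventually (\<lambda>n. d * (1 - (LINT x|lborel. Jn n x)) < k) sequentially"
    using assms by (intro order_tendstoD(2)) auto
  then show ?thesis
    by (rule eventually_mono) simp
qed

lemma AE_SUP_Jn_eq_J: "AE u in lborel. (SUP n. ennreal (Jn n u)) = ennreal (J u)"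
proof -
  define g where "g u = (SUP n. ennreal (Jn n u))" for u
  have [measurable]: "g \<in> borel_measurable borel"
    unfolding g_def[abs_def] by measurable
  have g_le: "g u \<le> ennreal (J u)" for u
    unfolding g_def by (rule SUP_least) (auto intro: ennreal_leI Jn_le_J)
  have "ennreal (J u) - g u \<le> ennreal \<bar>Jn n u - J u\<bar>" for n u
  proof -
    have "ennreal (J u) - g u \<le> ennreal (J u) - ennreal (Jn n u)"
      unfolding g_def by (intro ennreal_minus_mono SUP_upper) auto
    also have "\<dots> \<le> ennreal \<bar>Jn n u - J u\<bar>"
      using Jn_nonneg[of n u] by (simp add: ennreal_minus ennreal_leI)
    finally show ?thesis .
  qed
  then have "(\<integral>\<^sup>+u. ennreal (J u) - g u \<partial>lborel) \<le> ennreal (LINT x|lborel. \<bar>Jn n x - J x\<bar>)" for n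
    using J_integrable Jn_integrable
    by (subst nn_integral_eq_integral[symmetric]) (auto intro: nn_integral_mono)
  then have "(\<integral>\<^sup>+u. ennreal (J u) - g u \<partial>lborel) \<le> 0"
    using tendsto_ennrealI[OF L1] by (intro tendsto_lowerbound) auto
  then have "(\<integral>\<^sup>+u. ennreal (J u) - g u \<partial>lborel) = 0"
    by simp
  then have "AE u in lborel. ennreal (J u) - g u = 0"
    by (subst (asm) nn_integral_0_iff_AE) auto
  then show ?thesis
    unfolding g_def[symmetric]
    by eventually_elim (use g_le in \<open>auto simp: diff_eq_0_iff_ennreal intro: antisym\<close>)
qed

lemma SUP_nn_integral_Jn:
  assumes [measurable]: "w \<in> borel_measurable borel"
  shows "(SUP n. \<integral>\<^sup>+u. ennreal (Jn n u) * w u \<partial>lborel) = (\<integral>\<^sup>+u. ennreal (J u) * w u \<partial>lborel)"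
proof -
  have "(SUP n. \<integral>\<^sup>+u. ennreal (Jn n u) * w u \<partial>lborel) = (\<integral>\<^sup>+u. (SUP n. ennreal (Jn n u)) * w u \<partial>lborel)"
    by (subst nn_integral_monotone_convergence_SUP[symmetric])
      (auto simp: incseq_Suc_iff le_fun_def SUP_mult_right_ennreal intro!: mult_right_mono ennreal_leI Jn_mono)
  also have "\<dots> = (\<integral>\<^sup>+u. ennreal (J u) * w u \<partial>lborel)"
    using AE_SUP_Jn_eq_J by (intro nn_integral_cong_AE) auto
  finally show ?thesis .
qed

lemma eventually_tail_moment_ge:
  assumes infinite: "(\<integral>\<^sup>+x. \<integral>\<^sup>+y. ennreal (indicator {..0} x * indicator {0..} y * J (x - y)) \<partial>lborel \<partial>lborel) = \<infinity>"
    and "0 \<le> l"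
  shows "eventually (\<lambda>n. ennreal B \<le> tail_moment (Jn n) l) sequentially"
proof -
  have "tail_moment J l = \<infinity>"
    using J_nonneg J_even nn_integral_eq_integral[OF J_integrable] J_mass assms
    by (intro tail_moment_eq_infinity) auto
  then have "(SUP n. tail_moment (Jn n) l) = \<infinity>"
    unfolding tail_moment_def by (subst SUP_nn_integral_Jn) auto
  then have "ennreal B < (SUP n. tail_moment (Jn n) l)"
    by (simp only:) simp
  then obtain N where N: "ennreal B < tail_moment (Jn N) l"
    by (auto simp only: less_SUP_iff)
  have "incseq (\<lambda>n. Jn n x)" for x
    using Jn_mono by (rule incseq_SucI)
  then have "tail_moment (Jn N) l \<le> tail_moment (Jn n) l" if "N \<le> n" for n
    unfolding tail_moment_def using that
    by (intro nn_integral_mono mult_right_mono ennreal_leI) (auto simp: incseq_def)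
  then show ?thesis
    using N unfolding eventually_sequentially by (meson less_imp_le order_trans)
qed

end

section \<open>Integrals over a bounded interval\<close>

lemma integrable_indicator_Ico_continuous:
  fixes g :: "real \<Rightarrow> real"
  assumes "continuous_on {a..b} g"
  shows "integrable lborel (\<lambda>z. indicator {a..<b} z * g z)"
proof -
  have "integrable lborel (\<lambda>z. indicator {a..<b} z *\<^sub>R (indicator {a..b} z *\<^sub>R g z))"
    by (intro integrable_mult_indicator borel_integrable_compact assms) auto
  also have "(\<lambda>z. indicator {a..<b} z *\<^sub>R (indicator {a..b} z *\<^sub>R g z)) = (\<lambda>z. indicator {a..<b} z * g z)"
    by (auto simp: indicator_def)
  finally show ?thesis .
qed

lemma nn_integral_Ico_derivative_combination:
  fixes \<phi> \<phi>' :: "real \<Rightarrow> real"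
  assumes "a \<le> b" and "0 \<le> d"
    and deriv: "\<And>z. z \<in> {a..b} \<Longrightarrow> (\<phi> has_real_derivative \<phi>' z) (at z within {a..b})"
    and cont': "continuous_on {a..b} \<phi>'"
    and nonneg: "\<And>z. z \<in> {a..<b} \<Longrightarrow> 0 \<le> d * \<phi> z - c * \<phi>' z"
    and \<phi>_nonneg: "\<And>z. z \<in> {a..<b} \<Longrightarrow> 0 \<le> \<phi> z"
    and "0 \<le> c * (\<phi> a - \<phi> b)"
  shows "(\<integral>\<^sup>+z. ennreal (indicator {a..<b} z * (d * \<phi> z - c * \<phi>' z)) \<partial>lborel)
       = ennreal d * (\<integral>\<^sup>+z. ennreal (indicator {a..<b} z * \<phi> z) \<partial>lborel) + ennreal (c * (\<phi> a - \<phi> b))"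
proof -
  have cont: "continuous_on {a..b} \<phi>"
    using deriv by (rule DERIV_continuous_on)
  let ?P = "LINT z|lborel. indicator {a..<b} z * \<phi> z"
  have "(LBINT z=a..b. \<phi>' z) = \<phi> b - \<phi> a"
    using assms(1) cont' deriv
    by (intro interval_integral_FTC_finite)
      (auto simp: min_def max_def has_real_derivative_iff_has_vector_derivative[symmetric])
  then have ftc: "(LINT z|lborel. indicator {a..<b} z * \<phi>' z) = \<phi> b - \<phi> a"
    using assms(1) by (simp add: interval_integral_Ico set_lebesgue_integral_def)
  have P_nonneg: "0 \<le> ?P"
    using \<phi>_nonneg by (intro Bochner_Integration.integral_nonneg) (simp add: indicator_def)
  have "(\<integral>\<^sup>+z. ennreal (indicator {a..<b} z * (d * \<phi> z - c * \<phi>' z)) \<partial>lborel)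
      = ennreal (LINT z|lborel. indicator {a..<b} z * (d * \<phi> z - c * \<phi>' z))"
    using nonneg
    by (intro nn_integral_eq_integral AE_I2 integrable_indicator_Ico_continuous continuous_intros cont cont')
      (simp add: indicator_def)
  also have "(LINT z|lborel. indicator {a..<b} z * (d * \<phi> z - c * \<phi>' z)) = d * ?P + c * (\<phi> a - \<phi> b)"
  proof -
    have "(LINT z|lborel. indicator {a..<b} z * (d * \<phi> z - c * \<phi>' z))
        = d * ?P - c * (LINT z|lborel. indicator {a..<b} z * \<phi>' z)"
      using integrable_indicator_Ico_continuous[OF cont] integrable_indicator_Ico_continuous[OF cont']
      by (simp add: right_diff_distrib mult.left_commute)
    then show ?thesis
      by (simp add: ftc right_diff_distrib)
  qed
  also have "ennreal (d * ?P + c * (\<phi> a - \<phi> b)) = ennreal d * ennreal ?P + ennreal (c * (\<phi> a - \<phi> b))"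
    using assms(2,7) P_nonneg by (simp add: ennreal_plus ennreal_mult)
  also have "ennreal ?P = (\<integral>\<^sup>+z. ennreal (indicator {a..<b} z * \<phi> z) \<partial>lborel)"
    using \<phi>_nonneg
    by (intro nn_integral_eq_integral[symmetric] AE_I2 integrable_indicator_Ico_continuous cont)
      (simp add: indicator_def)
  finally show ?thesis .
qed

lemma nn_integral_split_difference:
  fixes g h :: "real \<Rightarrow> real" and w :: "real \<Rightarrow> ennreal"
  assumes [measurable]: "(\<lambda>y. indicator A y * g y) \<in> borel_measurable borel"
    "(\<lambda>y. indicator A y * h y) \<in> borel_measurable borel" "w \<in> borel_measurable borel"
    and le: "\<And>y. y \<in> A \<Longrightarrow> 0 \<le> g y \<and> g y \<le> h y"
  shows "(\<integral>\<^sup>+y. ennreal (indicator A y * h y) * w y \<partial>lborel)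
       = (\<integral>\<^sup>+y. ennreal (indicator A y * (h y - g y)) * w y \<partial>lborel)
         + (\<integral>\<^sup>+y. ennreal (indicator A y * g y) * w y \<partial>lborel)"
proof -
  have [measurable]: "(\<lambda>y. indicator A y * (h y - g y)) \<in> borel_measurable borel"
    using borel_measurable_diff[OF assms(2,1)] by (simp add: right_diff_distrib)
  have "ennreal (indicator A y * h y) * w y
      = ennreal (indicator A y * (h y - g y)) * w y + ennreal (indicator A y * g y) * w y" for y
    using le[of y] by (cases "y \<in> A") (simp_all add: distrib_right[symmetric] ennreal_plus[symmetric])
  then show ?thesis
    by (simp only:) (rule nn_integral_add; measurable)
qed

lemma nn_integral_indicator_lower_bound:
  fixes h :: "real \<Rightarrow> real"
  assumes "p \<le> q" "{p..<q} \<subseteq> A" "0 \<le> k" and h: "\<And>y. p \<le> y \<Longrightarrow> y < q \<Longrightarrow> k \<le> h y"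
  shows "ennreal (k * (q - p)) \<le> (\<integral>\<^sup>+y. ennreal (indicator A y * h y) \<partial>lborel)"
proof -
  have "ennreal (k * (q - p)) = (\<integral>\<^sup>+y. ennreal k * indicator {p..<q} y \<partial>lborel)"
    using assms(1,3) by (simp add: nn_integral_cmult_indicator ennreal_mult)
  also have "\<dots> \<le> (\<integral>\<^sup>+y. ennreal (indicator A y * h y) \<partial>lborel)"
    using assms(2) h by (intro nn_integral_mono) (auto simp: indicator_def subset_eq intro: ennreal_leI)
  finally show ?thesis .
qed

section \<open>Semi-waves and the energy estimate\<close>

lemma cond_f3_continuous:
  assumes "cond_f3 f"
  shows "continuous_on {0..} f"
proof -
  obtain f' where "\<And>u. 0 \<le> u \<Longrightarrow> (f has_real_derivative f' u) (at u within {0..})"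
    using assms unfolding cond_f3_def by blast
  then show ?thesis
    by (intro DERIV_continuous_on) auto
qed

lemma cond_f3_chord_below:
  assumes "cond_f3 f" and "0 \<le> u" "u \<le> v" "0 < v"
  shows "f v / v * u \<le> f u"
proof (cases "u = 0")
  case True
  then show ?thesis using assms(1) by (simp add: cond_f3_def)
next
  case False
  then have "f v / v \<le> f u / u"
    using assms unfolding cond_f3_def by auto
  then show ?thesis
    using False assms(2) by (simp add: field_simps)
qed

(* The limit eta of phi at -infinity is arbitrary: it is only used as a bound for phi. *)
locale semiwave_profile =
  fixes d \<mu> c \<sigma> \<eta> :: real and K f \<phi> :: "real \<Rightarrow> real"
  assumes d_pos: "0 < d" and mu_pos: "0 < \<mu>" and c_pos: "0 < c"
    and K_measurable[measurable]: "K \<in> borel_measurable borel"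
    and K_nonneg: "\<And>t. 0 \<le> K t" and K_even: "\<And>t. K (- t) = K t"
    and K_integrable: "integrable lborel K"
    and sigma_eq: "\<sigma> = (LINT t|lborel. K t)" and sigma_le_1: "\<sigma> \<le> 1"
    and f3: "cond_f3 f"
    and semiwave: "semiwave d \<mu> K f \<eta> c \<phi>"
begin

definition nonlocal_term :: "real \<Rightarrow> real" where
  "nonlocal_term z = (LINT y:{..0}|lborel. K (z - y) * \<phi> y)"

definition profile_mass :: "real \<Rightarrow> ennreal" where
  "profile_mass x = (\<integral>\<^sup>+y. ennreal (indicator {x..<0} y * \<phi> y) \<partial>lborel)"

definition flux :: "real \<Rightarrow> real set \<Rightarrow> ennreal" where
  "flux x A = (\<integral>\<^sup>+y. ennreal (indicator {x..<0} y * \<phi> y) * kernel_mass K A y \<partial>lborel)"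

definition deficit :: "real \<Rightarrow> ennreal" where
  "deficit x = (\<integral>\<^sup>+y. ennreal (indicator {x..<0} y * (\<phi> x - \<phi> y)) * kernel_mass K {..<x} y \<partial>lborel)"

definition reaction_excess :: "real \<Rightarrow> ennreal" where
  "reaction_excess x = (\<integral>\<^sup>+y. ennreal (indicator {x..<0} y * (f (\<phi> y) - d * (1 - \<sigma>) * \<phi> y)) \<partial>lborel)"

lemma K_mass: "(\<integral>\<^sup>+t. ennreal (K t) \<partial>lborel) = ennreal \<sigma>"
  unfolding sigma_eq using K_integrable K_nonneg by (intro nn_integral_eq_integral) auto

lemma sigma_nonneg: "0 \<le> \<sigma>"
  unfolding sigma_eq using K_nonneg by (intro Bochner_Integration.integral_nonneg) auto

lemma f_half_pos: "0 < f (1/2)"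
  using f3 unfolding cond_f3_def by simp

lemma semiwave_ode:
  obtains \<phi>' where "\<And>z. z \<le> 0 \<Longrightarrow> (\<phi> has_real_derivative \<phi>' z) (at z within {..0})"
    and "continuous_on {..0} \<phi>'"
    and "\<And>z. z < 0 \<Longrightarrow> d * nonlocal_term z - d * \<phi> z + c * \<phi>' z + f (\<phi> z) = 0"
  using semiwave unfolding semiwave_def nonlocal_term_def by blast

lemma phi_zero: "\<phi> 0 = 0"
  using semiwave unfolding semiwave_def by blast

lemma phi_strict_antimono: "y < z \<Longrightarrow> z \<le> 0 \<Longrightarrow> \<phi> z < \<phi> y"
  using semiwave unfolding semiwave_def by blast

lemma phi_antimono: "y \<le> z \<Longrightarrow> z \<le> 0 \<Longrightarrow> \<phi> z \<le> \<phi> y"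
  using phi_strict_antimono[of y z] by (cases "y = z") auto

lemma phi_nonneg: "y \<le> 0 \<Longrightarrow> 0 \<le> \<phi> y"
  using phi_antimono[of y 0] phi_zero by simp

lemma phi_le_eta: "y \<le> 0 \<Longrightarrow> \<phi> y \<le> \<eta>"
proof -
  assume "y \<le> 0"
  have "(\<phi> \<longlongrightarrow> \<eta>) at_bot"
    using semiwave unfolding semiwave_def by blast
  moreover have "\<forall>\<^sub>F t in at_bot. \<phi> y \<le> \<phi> t"
    unfolding eventually_at_bot_linorder using \<open>y \<le> 0\<close> phi_antimono by (intro exI[of _ y]) auto
  ultimately show "\<phi> y \<le> \<eta>"
    by (rule tendsto_lowerbound) simp
qed

lemma phi_continuous: "continuous_on {..0} \<phi>"
proof -
  obtain \<phi>' where "\<And>z. z \<le> 0 \<Longrightarrow> (\<phi> has_real_derivative \<phi>' z) (at z within {..0})"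
    using semiwave_ode by blast
  then show ?thesis
    by (intro DERIV_continuous_on) auto
qed

lemma indicator_comp_phi_measurable:
  fixes g :: "real \<Rightarrow> real"
  assumes "S \<subseteq> {..0}" "S \<in> sets borel" "continuous_on {0..} g"
  shows "(\<lambda>z. indicator S z * g (\<phi> z)) \<in> borel_measurable borel"
proof -
  have cont: "continuous_on S (\<lambda>z. g (\<phi> z))"
    using assms(1) phi_nonneg
    by (intro continuous_on_compose2[OF assms(3) continuous_on_subset[OF phi_continuous assms(1)]]) auto
  show ?thesis
    using borel_measurable_continuous_on_indicator[OF assms(2) cont] by simp
qed

lemma truncated_phi_measurable[measurable]: "(\<lambda>y. indicator {..0} y * \<phi> y) \<in> borel_measurable borel"
  using indicator_comp_phi_measurable[of "{..0}" "\<lambda>u. u"] by simp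

lemma indicator_Ico_phi_measurable[measurable]:
  "(\<lambda>y. indicator {x..<0} y * \<phi> y) \<in> borel_measurable borel"
  using indicator_comp_phi_measurable[of "{x..<0}" "\<lambda>u. u"] by force

lemma indicator_Ico_reaction_measurable[measurable]:
  "(\<lambda>y. indicator {x..<0} y * f (\<phi> y)) \<in> borel_measurable borel"
  using indicator_comp_phi_measurable[of "{x..<0}" f] cond_f3_continuous[OF f3] by force

lemma nonlocal_term_nonneg: "0 \<le> nonlocal_term z"
  and ennreal_nonlocal_term:
    "ennreal (nonlocal_term z) = (\<integral>\<^sup>+y. ennreal (indicator {..0} y * \<phi> y) * ennreal (K (z - y)) \<partial>lborel)"
proof -
  have integrable: "integrable lborel (\<lambda>y. indicator {..0} y * \<phi> y * K (z - y))"
  proof (rule Bochner_Integration.integrable_bound)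
    show "integrable lborel (\<lambda>y. \<eta> * K (z - y))"
      using lborel_integrable_real_affine[OF K_integrable, of "-1" z] by simp
    show "AE y in lborel. norm (indicator {..0} y * \<phi> y * K (z - y)) \<le> norm (\<eta> * K (z - y))"
      using K_nonneg phi_nonneg phi_le_eta phi_nonneg[of 0] phi_le_eta[of 0]
      by (intro AE_I2) (auto simp: indicator_def abs_mult intro!: mult_right_mono order_trans[OF _ abs_ge_self])
  qed measurable
  have eq: "nonlocal_term z = (LINT y|lborel. indicator {..0} y * \<phi> y * K (z - y))"
    by (simp add: nonlocal_term_def set_lebesgue_integral_def mult_ac)
  have nonneg: "0 \<le> indicator {..0} y * \<phi> y * K (z - y)" for y
    using K_nonneg phi_nonneg by (simp add: indicator_def)
  show "0 \<le> nonlocal_term z"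
    unfolding eq using nonneg by (rule Bochner_Integration.integral_nonneg)
  show "ennreal (nonlocal_term z)
      = (\<integral>\<^sup>+y. ennreal (indicator {..0} y * \<phi> y) * ennreal (K (z - y)) \<partial>lborel)"
    unfolding eq using integrable nonneg K_nonneg phi_nonneg
    by (subst nn_integral_eq_integral[symmetric]) (auto intro!: nn_integral_cong simp: ennreal_mult indicator_def)
qed

lemma nonlocal_term_measurable[measurable]: "(\<lambda>z. ennreal (nonlocal_term z)) \<in> borel_measurable borel"
  unfolding ennreal_nonlocal_term by measurable

lemma nn_integral_kernel_mass_eq_nonlocal_term:
  assumes [measurable]: "A \<in> sets borel"
  shows "(\<integral>\<^sup>+y. ennreal (indicator {..0} y * \<phi> y) * kernel_mass K A y \<partial>lborel)
       = (\<integral>\<^sup>+z. indicator A z * ennreal (nonlocal_term z) \<partial>lborel)"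
  unfolding kernel_mass_def ennreal_nonlocal_term by (rule nn_integral_kernel_swap) measurable

lemma ode_balance:
  assumes "x < 0" and f_nonneg: "\<And>u. 0 \<le> u \<Longrightarrow> u \<le> \<phi> x \<Longrightarrow> 0 \<le> f u"
  shows "ennreal d * (\<integral>\<^sup>+y. ennreal (indicator {..0} y * \<phi> y) * kernel_mass K {x..<0} y \<partial>lborel)
           + (\<integral>\<^sup>+z. ennreal (indicator {x..<0} z * f (\<phi> z)) \<partial>lborel)
       = ennreal d * profile_mass x + ennreal (c * \<phi> x)"
proof -
  obtain \<phi>' where deriv: "\<And>z. z \<le> 0 \<Longrightarrow> (\<phi> has_real_derivative \<phi>' z) (at z within {..0})"
    and cont': "continuous_on {..0} \<phi>'"
    and ode: "\<And>z. z < 0 \<Longrightarrow> d * nonlocal_term z - d * \<phi> z + c * \<phi>' z + f (\<phi> z) = 0"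
    using semiwave_ode by blast
  have f_phi_nonneg: "0 \<le> f (\<phi> z)" if "z \<in> {x..<0}" for z
    using that phi_nonneg phi_antimono[of x z] by (intro f_nonneg) auto
  have balance: "d * nonlocal_term z + f (\<phi> z) = d * \<phi> z - c * \<phi>' z" if "z \<in> {x..<0}" for z
    using ode[of z] that by simp
  have balance_nonneg: "0 \<le> d * \<phi> z - c * \<phi>' z" if "z \<in> {x..<0}" for z
    using balance[OF that] f_phi_nonneg[OF that] nonlocal_term_nonneg[of z] d_pos
      mult_nonneg_nonneg[of d "nonlocal_term z"] by linarith
  have pointwise: "ennreal d * (indicator {x..<0} z * ennreal (nonlocal_term z))
      + ennreal (indicator {x..<0} z * f (\<phi> z)) = ennreal (indicator {x..<0} z * (d * \<phi> z - c * \<phi>' z))" for z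
    using balance[of z] f_phi_nonneg[of z] nonlocal_term_nonneg[of z] d_pos
    by (cases "z \<in> {x..<0}") (simp_all add: ennreal_mult[symmetric] ennreal_plus[symmetric] del: ennreal_plus)
  have "ennreal d * (\<integral>\<^sup>+y. ennreal (indicator {..0} y * \<phi> y) * kernel_mass K {x..<0} y \<partial>lborel)
      = (\<integral>\<^sup>+z. ennreal d * (indicator {x..<0} z * ennreal (nonlocal_term z)) \<partial>lborel)"
    unfolding nn_integral_kernel_mass_eq_nonlocal_term[OF atLeastLessThan_borel]
    by (rule nn_integral_cmult[symmetric]) measurable
  then have "ennreal d * (\<integral>\<^sup>+y. ennreal (indicator {..0} y * \<phi> y) * kernel_mass K {x..<0} y \<partial>lborel)
           + (\<integral>\<^sup>+z. ennreal (indicator {x..<0} z * f (\<phi> z)) \<partial>lborel)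
      = (\<integral>\<^sup>+z. ennreal (indicator {x..<0} z * (d * \<phi> z - c * \<phi>' z)) \<partial>lborel)"
    unfolding pointwise[symmetric] by (simp add: nn_integral_add)
  also have "\<dots> = ennreal d * profile_mass x + ennreal (c * (\<phi> x - \<phi> 0))"
    unfolding profile_mass_def
  proof (rule nn_integral_Ico_derivative_combination)
    show "(\<phi> has_real_derivative \<phi>' z) (at z within {x..0})" if "z \<in> {x..0}" for z
      using deriv[of z] that by (auto intro: DERIV_subset)
    show "0 \<le> c * (\<phi> x - \<phi> 0)"
      using c_pos phi_antimono[of x 0] \<open>x < 0\<close> by simp
  qed (use \<open>x < 0\<close> d_pos balance_nonneg phi_nonneg continuous_on_subset[OF cont'] in auto)
  finally show ?thesis
    by (simp add: phi_zero)
qed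

lemma kernel_mass_partition:
  assumes "x < 0"
  shows "kernel_mass K {x..<0} y + kernel_mass K {..<x} y + kernel_mass K {0..} y = ennreal \<sigma>"
proof -
  have "kernel_mass K ({x..<0} \<union> {..<x} \<union> {0..}) y
      = kernel_mass K ({x..<0} \<union> {..<x}) y + kernel_mass K {0..} y"
    using assms by (intro kernel_mass_Un) auto
  also have "kernel_mass K ({x..<0} \<union> {..<x}) y = kernel_mass K {x..<0} y + kernel_mass K {..<x} y"
    by (rule kernel_mass_Un) auto
  also have "{x..<0} \<union> {..<x} \<union> {0..} = (UNIV :: real set)"
    using assms by auto
  finally show ?thesis
    by (simp add: kernel_mass_UNIV K_mass)
qed

lemma flux_partition:
  assumes "x < 0"
  shows "flux x {x..<0} + flux x {..<x} + flux x {0..} = profile_mass x * ennreal \<sigma>"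
proof -
  have "flux x {x..<0} + flux x {..<x} + flux x {0..}
      = (\<integral>\<^sup>+y. ennreal (indicator {x..<0} y * \<phi> y) * (kernel_mass K {x..<0} y + kernel_mass K {..<x} y
          + kernel_mass K {0..} y) \<partial>lborel)"
    unfolding flux_def distrib_left by (simp add: nn_integral_add)
  also have "\<dots> = profile_mass x * ennreal \<sigma>"
    unfolding profile_mass_def kernel_mass_partition[OF assms] by (rule nn_integral_multc) measurable
  finally show ?thesis .
qed

lemma speed_eq_kernel_mass:
  "(\<integral>\<^sup>+y. ennreal (indicator {..0} y * \<phi> y) * kernel_mass K {0..} y \<partial>lborel) = ennreal (c / \<mu>)"
proof -
  have "(\<integral>\<^sup>+x. \<integral>\<^sup>+y. ennreal (indicator {..0} x * indicator {0..} y * K (x - y) * \<phi> x) \<partial>lborel \<partial>lborel)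
      = ennreal (c / \<mu>)"
    using semiwave unfolding semiwave_def by blast
  then show ?thesis
    by (simp add: nn_integral_half_lines_kernel_mass K_nonneg K_even phi_nonneg)
qed

lemma flux_right_le_speed: "flux x {0..} \<le> ennreal (c / \<mu>)"
  unfolding flux_def speed_eq_kernel_mass[symmetric]
  by (intro nn_integral_mono mult_right_mono) (auto simp: indicator_def phi_nonneg intro!: ennreal_leI)

lemma profile_mass_finite:
  assumes "x < 0"
  shows "profile_mass x < \<infinity>"
proof -
  have "profile_mass x \<le> (\<integral>\<^sup>+y. ennreal (\<phi> x) * indicator {x..<0} y \<partial>lborel)"
    unfolding profile_mass_def using phi_antimono[of x]
    by (intro nn_integral_mono) (auto simp: indicator_def intro: ennreal_leI)
  then show ?thesis
    using assms by (simp add: nn_integral_cmult_indicator ennreal_mult_less_top le_less_trans)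
qed

lemma nonlocal_mass_lower_bound:
  assumes "x < 0"
  shows "ennreal (\<phi> x) * (\<integral>\<^sup>+y. indicator {x..<0} y * kernel_mass K {..<x} y \<partial>lborel) + flux x {x..<0}
         \<le> (\<integral>\<^sup>+y. ennreal (indicator {..0} y * \<phi> y) * kernel_mass K {x..<0} y \<partial>lborel)"
proof -
  have "ennreal (\<phi> x) * (\<integral>\<^sup>+y. indicator {x..<0} y * kernel_mass K {..<x} y \<partial>lborel)
      = (\<integral>\<^sup>+y. ennreal (\<phi> x) * (indicator {..<x} y * kernel_mass K {x..<0} y) \<partial>lborel)"
    by (simp add: kernel_mass_swap K_even nn_integral_cmult)
  then have "ennreal (\<phi> x) * (\<integral>\<^sup>+y. indicator {x..<0} y * kernel_mass K {..<x} y \<partial>lborel) + flux x {x..<0}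
      = (\<integral>\<^sup>+y. (ennreal (\<phi> x) * indicator {..<x} y + ennreal (indicator {x..<0} y * \<phi> y))
            * kernel_mass K {x..<0} y \<partial>lborel)"
    unfolding flux_def by (simp add: nn_integral_add distrib_right mult.assoc)
  also have "\<dots> \<le> (\<integral>\<^sup>+y. ennreal (indicator {..0} y * \<phi> y) * kernel_mass K {x..<0} y \<partial>lborel)"
  proof (intro nn_integral_mono mult_right_mono)
    fix y
    show "ennreal (\<phi> x) * indicator {..<x} y + ennreal (indicator {x..<0} y * \<phi> y)
        \<le> ennreal (indicator {..0} y * \<phi> y)"
      using assms phi_antimono[of y x] by (cases "y < x") (auto simp: indicator_def intro: ennreal_leI)
  qed simp
  finally show ?thesis .
qed

lemma deficit_split:
  "ennreal (\<phi> x) * (\<integral>\<^sup>+y. indicator {x..<0} y * kernel_mass K {..<x} y \<partial>lborel)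
     = deficit x + flux x {..<x}"
proof -
  have phi_range: "0 \<le> \<phi> y \<and> \<phi> y \<le> \<phi> x" if "y \<in> {x..<0}" for y
    using that phi_nonneg phi_antimono[of x y] by auto
  have "ennreal (\<phi> x) * (\<integral>\<^sup>+y. indicator {x..<0} y * kernel_mass K {..<x} y \<partial>lborel)
      = (\<integral>\<^sup>+y. ennreal (\<phi> x) * (indicator {x..<0} y * kernel_mass K {..<x} y) \<partial>lborel)"
    by (rule nn_integral_cmult[symmetric]) measurable
  also have "\<dots> = (\<integral>\<^sup>+y. ennreal (indicator {x..<0} y * \<phi> x) * kernel_mass K {..<x} y \<partial>lborel)"
    by (intro nn_integral_cong) (simp add: indicator_def)
  also have "\<dots> = deficit x + flux x {..<x}"
    unfolding deficit_def flux_def by (rule nn_integral_split_difference[OF _ _ _ phi_range]) measurable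
  finally show ?thesis .
qed

lemma reaction_split:
  assumes margin: "\<And>u. 0 \<le> u \<Longrightarrow> u \<le> \<phi> x \<Longrightarrow> d * (1 - \<sigma>) * u \<le> f u"
  shows "(\<integral>\<^sup>+y. ennreal (indicator {x..<0} y * f (\<phi> y)) \<partial>lborel)
       = reaction_excess x + ennreal (d * (1 - \<sigma>)) * profile_mass x"
proof -
  let ?s = "d * (1 - \<sigma>)"
  have s_nonneg: "0 \<le> ?s"
    using d_pos sigma_le_1 by simp
  have range: "0 \<le> ?s * \<phi> y \<and> ?s * \<phi> y \<le> f (\<phi> y)" if "y \<in> {x..<0}" for y
    using that phi_nonneg[of y] phi_antimono[of x y] margin[of "\<phi> y"] s_nonneg by auto
  have [measurable]: "(\<lambda>y. indicator {x..<0} y * (?s * \<phi> y)) \<in> borel_measurable borel"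
    by (subst mult.left_commute) measurable
  have "(\<integral>\<^sup>+y. ennreal (indicator {x..<0} y * f (\<phi> y)) * 1 \<partial>lborel)
      = (\<integral>\<^sup>+y. ennreal (indicator {x..<0} y * (f (\<phi> y) - ?s * \<phi> y)) * 1 \<partial>lborel)
        + (\<integral>\<^sup>+y. ennreal (indicator {x..<0} y * (?s * \<phi> y)) * 1 \<partial>lborel)"
    by (rule nn_integral_split_difference[OF _ _ _ range]) measurable
  also have "(\<integral>\<^sup>+y. ennreal (indicator {x..<0} y * (?s * \<phi> y)) * 1 \<partial>lborel) = ennreal ?s * profile_mass x"
  proof -
    have "ennreal ?s * profile_mass x = (\<integral>\<^sup>+y. ennreal ?s * ennreal (indicator {x..<0} y * \<phi> y) \<partial>lborel)"
      unfolding profile_mass_def by (rule nn_integral_cmult[symmetric]) measurable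
    then show ?thesis
      using s_nonneg by (simp add: ennreal_mult'[symmetric] mult.left_commute)
  qed
  finally show ?thesis
    by (simp only: mult_1_right reaction_excess_def)
qed

lemma margin_imp_reaction_nonneg:
  assumes margin: "\<And>u. 0 \<le> u \<Longrightarrow> u \<le> b \<Longrightarrow> d * (1 - \<sigma>) * u \<le> f u" and "0 \<le> u" "u \<le> b"
  shows "0 \<le> f u"
proof -
  have "0 \<le> d * (1 - \<sigma>) * u"
    using assms(2) d_pos sigma_le_1 by simp
  then show ?thesis
    using margin[OF assms(2,3)] by linarith
qed

lemma outflow_le_speed:
  assumes "x \<le> 0"
  shows "ennreal d * flux x {0..} + ennreal (c * \<phi> x) \<le> ennreal (c * (\<phi> x + d / \<mu>))"
proof -
  have "ennreal d * flux x {0..} \<le> ennreal (d * c / \<mu>)"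
    using mult_left_mono[OF flux_right_le_speed, of "ennreal d"] d_pos c_pos mu_pos
    by (simp add: ennreal_mult[symmetric])
  moreover have "ennreal (d * c / \<mu>) + ennreal (c * \<phi> x) = ennreal (c * (\<phi> x + d / \<mu>))"
    using d_pos c_pos mu_pos phi_nonneg[OF assms]
    by (simp add: ennreal_plus[symmetric] algebra_simps del: ennreal_plus)
  ultimately show ?thesis
    by (metis add_right_mono)
qed

lemma energy_estimate:
  assumes "x < 0" and margin: "\<And>u. 0 \<le> u \<Longrightarrow> u \<le> \<phi> x \<Longrightarrow> d * (1 - \<sigma>) * u \<le> f u"
  shows "ennreal d * deficit x + reaction_excess x \<le> ennreal (c * (\<phi> x + d / \<mu>))"
proof -
  let ?s = "d * (1 - \<sigma>)" and ?P = "profile_mass x"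
  let ?Q = "\<integral>\<^sup>+y. ennreal (indicator {..0} y * \<phi> y) * kernel_mass K {x..<0} y \<partial>lborel"
  define Z where "Z = ennreal d * flux x {..<x} + ennreal d * flux x {x..<0} + ennreal ?s * ?P"
  have "flux x {x..<0} + flux x {..<x} \<le> ?P * ennreal \<sigma>"
    unfolding flux_partition[OF assms(1), symmetric] by (rule add_increasing2) auto
  then have "Z \<noteq> \<infinity>"
    using profile_mass_finite[OF assms(1)]
    by (auto simp: Z_def ennreal_mult_eq_top_iff ennreal_mult_less_top top_unique)
  have d_split: "ennreal d = ennreal d * ennreal \<sigma> + ennreal ?s"
    using d_pos sigma_nonneg sigma_le_1
    by (simp add: ennreal_mult[symmetric] ennreal_plus[symmetric] algebra_simps del: ennreal_plus)
  have reaction: "(\<integral>\<^sup>+y. ennreal (indicator {x..<0} y * f (\<phi> y)) \<partial>lborel) = reaction_excess x + ennreal ?s * ?P"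
    by (rule reaction_split) (fact margin)
  have balance: "ennreal d * ?Q + (reaction_excess x + ennreal ?s * ?P) = ennreal d * ?P + ennreal (c * \<phi> x)"
    unfolding reaction[symmetric] using margin_imp_reaction_nonneg[OF margin]
    by (rule ode_balance[OF assms(1)])
  have "Z + (ennreal d * deficit x + reaction_excess x)
      = ennreal d * (ennreal (\<phi> x) * (\<integral>\<^sup>+y. indicator {x..<0} y * kernel_mass K {..<x} y \<partial>lborel)
          + flux x {x..<0}) + (reaction_excess x + ennreal ?s * ?P)"
    unfolding Z_def deficit_split by (simp add: distrib_left add_ac)
  also have "\<dots> \<le> ennreal d * ?Q + (reaction_excess x + ennreal ?s * ?P)"
    by (intro add_mono mult_left_mono nonlocal_mass_lower_bound[OF assms(1)]) simp_all
  also have "\<dots> = ennreal d * (?P * ennreal \<sigma>) + ennreal ?s * ?P + ennreal (c * \<phi> x)"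
    unfolding balance by (subst d_split) (simp add: distrib_left distrib_right mult_ac)
  also have "\<dots> = Z + (ennreal d * flux x {0..} + ennreal (c * \<phi> x))"
    unfolding flux_partition[OF assms(1), symmetric] Z_def by (simp add: distrib_left add_ac)
  also have "\<dots> \<le> Z + ennreal (c * (\<phi> x + d / \<mu>))"
    using outflow_le_speed assms(1) by (intro add_left_mono) simp
  finally show ?thesis
    using \<open>Z \<noteq> \<infinity>\<close> by (simp only: ennreal_add_left_cancel_le) simp
qed

section \<open>Lower bound for the speed\<close>

lemma reaction_margin:
  assumes small: "d * (1 - \<sigma>) \<le> f (1/2)" and "0 \<le> u" "u \<le> 1/2"
  shows "f (1/2) * u \<le> f u - d * (1 - \<sigma>) * u"
proof -
  have "f (1/2) / (1/2) * u \<le> f u"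
    using assms by (intro cond_f3_chord_below[OF f3]) auto
  moreover have "d * (1 - \<sigma>) * u \<le> f (1/2) * u"
    using small \<open>0 \<le> u\<close> by (rule mult_right_mono)
  ultimately show ?thesis
    by simp
qed

lemma energy_estimate_below_half:
  assumes small: "d * (1 - \<sigma>) \<le> f (1/2)" and "x < 0" "\<phi> x \<le> 1/2"
  shows "ennreal d * deficit x + reaction_excess x \<le> ennreal (c * (1/2 + d / \<mu>))"
proof -
  have "d * (1 - \<sigma>) * u \<le> f u" if "0 \<le> u" "u \<le> \<phi> x" for u
    using reaction_margin[OF small that(1)] that assms(3) f_half_pos mult_nonneg_nonneg[of "f (1/2)" u]
    by linarith
  then have "ennreal d * deficit x + reaction_excess x \<le> ennreal (c * (\<phi> x + d / \<mu>))"
    by (rule energy_estimate[OF assms(2)])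
  also have "\<dots> \<le> ennreal (c * (1/2 + d / \<mu>))"
    using assms(3) c_pos by (intro ennreal_leI mult_left_mono) auto
  finally show ?thesis .
qed

lemma reaction_excess_bound:
  assumes "d * (1 - \<sigma>) \<le> f (1/2)" and "x < 0" "\<phi> x \<le> 1/2"
  shows "reaction_excess x \<le> ennreal (c * (1/2 + d / \<mu>))"
  using energy_estimate_below_half[OF assms] by (rule order_trans[OF add_increasing[OF zero_le order_refl]])

lemma deficit_bound:
  assumes "d * (1 - \<sigma>) \<le> f (1/2)" and "x < 0" "\<phi> x \<le> 1/2"
  shows "ennreal d * deficit x \<le> ennreal (c * (1/2 + d / \<mu>))"
  using energy_estimate_below_half[OF assms] by (rule order_trans[OF add_increasing2[OF zero_le order_refl]])

lemma exists_phi_ge_half: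
  assumes small: "d * (1 - \<sigma>) \<le> f (1/2)"
  shows "\<exists>x\<le>0. 1/2 \<le> \<phi> x"
proof (rule ccontr)
  assume "\<not> ?thesis"
  then have below: "\<phi> y < 1/2" if "y \<le> 0" for y
    using that by force
  let ?R = "c * (1/2 + d / \<mu>)"
  define p where "p = \<phi> (-1)"
  have "0 < p"
    unfolding p_def using phi_strict_antimono[of "-1" 0] phi_zero by simp
  define x where "x = -1 - (?R + 1) / (f (1/2) * p)"
  have x_lt: "x < -1" and width: "f (1/2) * p * (-1 - x) = ?R + 1"
    unfolding x_def using \<open>0 < p\<close> f_half_pos c_pos d_pos mu_pos by (simp_all add: add_pos_pos)
  have "ennreal (f (1/2) * p * (-1 - x)) \<le> reaction_excess x"
    unfolding reaction_excess_def
  proof (rule nn_integral_indicator_lower_bound)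
    fix y assume y: "x \<le> y" "y < -1"
    then have "p \<le> \<phi> y" "0 \<le> \<phi> y" "\<phi> y < 1/2"
      unfolding p_def using phi_antimono[of y "-1"] phi_nonneg[of y] below[of y] by auto
    then show "f (1/2) * p \<le> f (\<phi> y) - d * (1 - \<sigma>) * \<phi> y"
      using reaction_margin[OF small, of "\<phi> y"] mult_left_mono[of p "\<phi> y" "f (1/2)"] f_half_pos
      by linarith
  qed (use x_lt \<open>0 < p\<close> f_half_pos in auto)
  also have "\<dots> \<le> ennreal ?R"
    using x_lt below[of x] by (intro reaction_excess_bound[OF small]) auto
  finally show False
    using width c_pos d_pos mu_pos by (simp add: add_pos_pos)
qed

lemma reaches_half:
  assumes small: "d * (1 - \<sigma>) \<le> f (1/2)"
  obtains a where "a < 0" "\<phi> a = 1/2"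
proof -
  obtain x0 where "x0 \<le> 0" "1/2 \<le> \<phi> x0"
    using exists_phi_ge_half[OF small] by blast
  moreover have "continuous_on {x0..0} \<phi>"
    by (rule continuous_on_subset[OF phi_continuous]) auto
  ultimately obtain a where "x0 \<le> a" "a \<le> 0" "\<phi> a = 1/2"
    using IVT2'[of \<phi> 0 "1/2" x0] phi_zero by auto
  moreover have "a \<noteq> 0"
    using \<open>\<phi> a = 1/2\<close> phi_zero by auto
  ultimately show thesis
    using that[of a] by simp
qed

lemma plateau_length_nonneg: "0 < M \<Longrightarrow> 0 \<le> 4 * M * (1/2 + d / \<mu>) / f (1/2)"
  using d_pos mu_pos f_half_pos by (simp add: add_pos_pos)

(* The plateau length l is chosen so that f(1/2)/4 * l = M * (1/2 + d/mu): a longer stretch of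
   phi above 1/4 would make the reaction excess exceed its bound when c < M. *)
lemma plateau_below_quarter:
  assumes small: "d * (1 - \<sigma>) \<le> f (1/2)" and "a < 0" "\<phi> a = 1/2" and "c < M"
    and l: "l = 4 * M * (1/2 + d / \<mu>) / f (1/2)" and y: "a + l \<le> y" "y < 0"
  shows "\<phi> y \<le> 1/4"
proof (rule ccontr)
  assume "\<not> \<phi> y \<le> 1/4"
  have "0 \<le> l"
    unfolding l using \<open>c < M\<close> c_pos by (intro plateau_length_nonneg) simp
  have "ennreal (f (1/2) / 4 * (y - a)) \<le> reaction_excess a"
    unfolding reaction_excess_def
  proof (rule nn_integral_indicator_lower_bound)
    fix z assume z: "a \<le> z" "z < y"
    then have "1/4 < \<phi> z" "\<phi> z \<le> 1/2"
      using phi_antimono[of z y] phi_antimono[of a z] \<open>\<not> \<phi> y \<le> 1/4\<close> \<open>\<phi> a = 1/2\<close> y by auto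
    then show "f (1/2) / 4 \<le> f (\<phi> z) - d * (1 - \<sigma>) * \<phi> z"
      using reaction_margin[OF small, of "\<phi> z"] mult_left_mono[of "1/4" "\<phi> z" "f (1/2)"] f_half_pos
      by linarith
  qed (use y f_half_pos \<open>a < 0\<close> \<open>0 \<le> l\<close> in auto)
  also have "\<dots> \<le> ennreal (c * (1/2 + d / \<mu>))"
    using \<open>a < 0\<close> \<open>\<phi> a = 1/2\<close> by (intro reaction_excess_bound[OF small]) auto
  finally have "f (1/2) / 4 * (y - a) \<le> c * (1/2 + d / \<mu>)"
    using c_pos d_pos mu_pos by (simp add: add_pos_pos)
  moreover have "M * (1/2 + d / \<mu>) \<le> f (1/2) / 4 * (y - a)"
    using y f_half_pos unfolding l by (simp add: field_simps)
  moreover have "c * (1/2 + d / \<mu>) < M * (1/2 + d / \<mu>)"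
    using \<open>c < M\<close> d_pos mu_pos by (intro mult_strict_right_mono) (auto simp: add_pos_pos)
  ultimately show False
    by linarith
qed

lemma far_flux_bound:
  assumes "a \<le> 0"
  shows "ennreal (\<phi> a) * (\<integral>\<^sup>+y. indicator {..<a} y * kernel_mass K {0..} y \<partial>lborel) \<le> ennreal (c / \<mu>)"
proof -
  have "ennreal (\<phi> a) * (\<integral>\<^sup>+y. indicator {..<a} y * kernel_mass K {0..} y \<partial>lborel)
      = (\<integral>\<^sup>+y. ennreal (\<phi> a) * indicator {..<a} y * kernel_mass K {0..} y \<partial>lborel)"
    by (subst nn_integral_cmult[symmetric]) (auto simp: mult.assoc)
  also have "\<dots> \<le> (\<integral>\<^sup>+y. ennreal (indicator {..0} y * \<phi> y) * kernel_mass K {0..} y \<partial>lborel)"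
    using assms phi_antimono
    by (intro nn_integral_mono mult_right_mono) (auto simp: indicator_def intro!: ennreal_leI)
  finally show ?thesis
    by (simp only: speed_eq_kernel_mass)
qed

lemma deficit_ge_near_flux:
  assumes small: "d * (1 - \<sigma>) \<le> f (1/2)" and a: "a < 0" "\<phi> a = 1/2" and "c < M"
    and l: "l = 4 * M * (1/2 + d / \<mu>) / f (1/2)"
  shows "ennreal (1/4) * (\<integral>\<^sup>+y. indicator {a + l..<0} y * kernel_mass K {..<a} y \<partial>lborel) \<le> deficit a"
proof -
  have "0 \<le> l"
    unfolding l using \<open>c < M\<close> c_pos by (intro plateau_length_nonneg) simp
  have "ennreal (1/4) * (\<integral>\<^sup>+y. indicator {a + l..<0} y * kernel_mass K {..<a} y \<partial>lborel)
      = (\<integral>\<^sup>+y. ennreal (1/4) * (indicator {a + l..<0} y * kernel_mass K {..<a} y) \<partial>lborel)"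
    by (rule nn_integral_cmult[symmetric]) measurable
  also have "\<dots> \<le> deficit a"
    unfolding deficit_def
  proof (intro nn_integral_mono)
    fix y
    show "ennreal (1/4) * (indicator {a + l..<0} y * kernel_mass K {..<a} y)
        \<le> ennreal (indicator {a..<0} y * (\<phi> a - \<phi> y)) * kernel_mass K {..<a} y"
      using plateau_below_quarter[OF small a \<open>c < M\<close> l, of y] \<open>0 \<le> l\<close> a
      by (cases "y \<in> {a + l..<0}") (auto simp: mult.assoc[symmetric] intro!: mult_right_mono ennreal_leI)
  qed
  finally show ?thesis .
qed

lemma tail_moment_bound:
  assumes small: "d * (1 - \<sigma>) \<le> f (1/2)" and a: "a < 0" "\<phi> a = 1/2" and "c < M"
    and l: "l = 4 * M * (1/2 + d / \<mu>) / f (1/2)"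
  shows "ennreal (d / 4) * tail_moment K l \<le> ennreal (c * (1/2 + d / \<mu>) + d / 2 * (c / \<mu>))"
proof -
  define near where "near = (\<integral>\<^sup>+y. indicator {a + l..<0} y * kernel_mass K {..<a} y \<partial>lborel)"
  define far where "far = (\<integral>\<^sup>+y. indicator {..<a} y * kernel_mass K {0..} y \<partial>lborel)"
  have "0 \<le> l"
    unfolding l using \<open>c < M\<close> c_pos by (intro plateau_length_nonneg) simp
  have "ennreal d * (ennreal (1/4) * near) \<le> ennreal (c * (1/2 + d / \<mu>))"
    using mult_left_mono[OF deficit_ge_near_flux[OF small a \<open>c < M\<close> l], of "ennreal d"]
      deficit_bound[OF small a(1)] a(2)
    unfolding near_def by fastforce
  moreover have "ennreal (1/2) * far \<le> ennreal (c / \<mu>)"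
    using far_flux_bound[of a] a unfolding far_def by simp
  ultimately have "ennreal d * (ennreal (1/4) * near) + ennreal (d / 2) * (ennreal (1/2) * far)
      \<le> ennreal (c * (1/2 + d / \<mu>)) + ennreal (d / 2) * ennreal (c / \<mu>)"
    by (intro add_mono mult_left_mono) auto
  also have "\<dots> = ennreal (c * (1/2 + d / \<mu>) + d / 2 * (c / \<mu>))"
    using d_pos c_pos mu_pos by (simp add: ennreal_mult[symmetric] ennreal_plus[symmetric] del: ennreal_plus)
  finally have near_far: "ennreal d * (ennreal (1/4) * near) + ennreal (d / 2) * (ennreal (1/2) * far)
      \<le> ennreal (c * (1/2 + d / \<mu>) + d / 2 * (c / \<mu>))" .
  have "ennreal (d / 4) = ennreal d * ennreal (1/4)" "ennreal (d / 4) = ennreal (d / 2) * ennreal (1/2)"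
    using d_pos by (subst ennreal_mult[symmetric]; simp)+
  then have "ennreal (d / 4) * tail_moment K l
      \<le> ennreal d * (ennreal (1/4) * near) + ennreal (d / 2) * (ennreal (1/2) * far)"
    using tail_moment_le_kernel_masses[OF K_measurable K_even a(1) \<open>0 \<le> l\<close>]
    unfolding near_def far_def by (metis (no_types, lifting) distrib_left mult.assoc mult_left_mono zero_le)
  then show ?thesis
    using near_far by (rule order_trans)
qed

lemma speed_lower_bound:
  assumes small: "d * (1 - \<sigma>) \<le> f (1/2)" and "0 < M"
    and l: "l = 4 * M * (1/2 + d / \<mu>) / f (1/2)"
    and tail: "ennreal (M * (2 / d + 8 / \<mu>)) \<le> tail_moment K l"
  shows "M \<le> c"
proof (rule ccontr)
  assume "\<not> M \<le> c"
  then have "c < M"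
    by simp
  obtain a where a: "a < 0" "\<phi> a = 1/2"
    using reaches_half[OF small] by blast
  have "ennreal (d / 4 * (M * (2 / d + 8 / \<mu>))) \<le> ennreal (d / 4) * tail_moment K l"
    using d_pos \<open>0 < M\<close> mu_pos by (subst ennreal_mult) (auto intro!: mult_left_mono tail)
  then have "d / 4 * (M * (2 / d + 8 / \<mu>)) \<le> c * (1/2 + d / \<mu>) + d / 2 * (c / \<mu>)"
    using tail_moment_bound[OF small a \<open>c < M\<close> l] d_pos c_pos mu_pos
    by (subst ennreal_le_iff[symmetric]) (auto intro!: add_nonneg_nonneg elim: order_trans)
  moreover have "d / 4 * (M * (2 / d + 8 / \<mu>)) = M / 2 + 2 * (M * (d / \<mu>))"
    using d_pos mu_pos by (simp add: field_simps)
  moreover have "c * (1/2 + d / \<mu>) + d / 2 * (c / \<mu>) = c / 2 + 3 / 2 * (c * (d / \<mu>))"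
    using mu_pos by (simp add: field_simps)
  moreover have "0 < c * (d / \<mu>)"
    using c_pos d_pos mu_pos by simp
  moreover have "c * (d / \<mu>) < M * (d / \<mu>)"
    using \<open>c < M\<close> d_pos mu_pos by (intro mult_strict_right_mono) auto
  ultimately show False
    using \<open>c < M\<close> by linarith
qed

end

theorem lemma4p3:
  fixes d \<mu> :: real and J f :: "real \<Rightarrow> real"
    and Jn :: "nat \<Rightarrow> real \<Rightarrow> real" and c :: "nat \<Rightarrow> real"
  assumes "d > 0" and "\<mu> > 0"
    and "kernel_J J"
    and "(\<integral>\<^sup>+ x. \<integral>\<^sup>+ y. ennreal (indicator {..0} x * indicator {0..} y * J (x - y)) \<partial>lborel \<partial>lborel) = \<infinity>"
    and "cond_f3 f"
    and "\<And>n. continuous_on UNIV (Jn n)"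
    and "\<And>n x. Jn n x \<ge> 0"
    and "\<And>n x. Jn n (-x) = Jn n x"
    and "\<And>n. compact (closure {x. Jn n x \<noteq> 0}) \<and> closure {x. Jn n x \<noteq> 0} \<noteq> {}"
    and "\<And>n x. Jn n x \<le> Jn (Suc n) x \<and> Jn (Suc n) x \<le> J x"
    and "(\<lambda>n. LINT x|lborel. \<bar>Jn n x - J x\<bar>) \<longlonglongrightarrow> 0"
    and "eventually (\<lambda>n. c n > 0
           \<and> (\<exists>\<phi>. semiwave d \<mu> (Jn n) f (eta f (LINT x|lborel. Jn n x)) (c n) \<phi>)
           \<and> (\<forall>c'. c' > 0 \<and> (\<exists>\<phi>. semiwave d \<mu> (Jn n) f (eta f (LINT x|lborel. Jn n x)) c' \<phi>)
                   \<longrightarrow> c' = c n)) sequentially"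
  shows "filterlim c at_top sequentially"
proof -
  interpret approximating_kernels J Jn
  proof
    show "Jn n x \<le> J x" for n x
      using assms(10)[of n x] by (meson order_trans)
  qed (use assms(3,6,7,9,10,11) in auto)
  have f_half: "0 < f (1/2)"
    using assms(5) unfolding cond_f3_def by simp
  show ?thesis
    unfolding filterlim_at_top
  proof
    fix Z :: real
    define M where "M = max Z 1"
    define l where "l = 4 * M * (1/2 + d / \<mu>) / f (1/2)"
    have "0 < M"
      by (simp add: M_def)
    then have "0 \<le> l"
      using assms(1,2) f_half by (simp add: l_def add_pos_pos)
    show "eventually (\<lambda>n. Z \<le> c n) sequentially"
      using assms(12) eventually_mass_defect_le[OF f_half, of d]
        eventually_tail_moment_ge[OF assms(4) \<open>0 \<le> l\<close>, of "M * (2 / d + 8 / \<mu>)"]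
    proof eventually_elim
      case (elim n)
      then obtain \<phi> where "semiwave d \<mu> (Jn n) f (eta f (LINT x|lborel. Jn n x)) (c n) \<phi>" and "0 < c n"
        by blast
      then interpret semiwave_profile d \<mu> "c n" "LINT x|lborel. Jn n x" "eta f (LINT x|lborel. Jn n x)" "Jn n" f \<phi>
        using assms(1,2,5,7,8) Jn_integrable Jn_mass_le_1 by unfold_locales auto
      have "M \<le> c n"
        using elim \<open>0 < M\<close> by (intro speed_lower_bound[OF _ _ l_def]) auto
      then show ?case
        unfolding M_def by simp
    qed
  qed
qed

end
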